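(* Let $n\ge2$, $Q>0$ real, and let $P\in\mathrm{Mat}(n^2,\mathbb{C})$ be a solution of rank $r$ to $$P^*=P,\quad P^2=P,\quad Q^2(P_1P_2P_1-P_2P_1P_2)=P_1-P_2,$$ where $P_1=P\otimes I_n$, $P_2=I_n\otimes P$. Let $k=\tfrac12\operatorname{rank}(P_1-P_2)$. Then $$rn-k+Q^{-1}k\le r^2 .$$
   Context: $I_n$ is the $n\times n$ identity matrix and $\otimes$ is the Kronecker product. *)

theory Defs
  imports "HOL-Analysis.Analysis"
begin

definition kron :: "'a::times^'n^'m \<Rightarrow> 'a^'q^'p \<Rightarrow> 'a^('n\<times>'q)^('m\<times>'p)" where
  "kron A B = (\<chi> x y. (A $ fst x $ fst y) * (B $ snd x $ snd y))"

definition adjoint_mat :: "complex^'n^'n \<Rightarrow> complex^'n^'n" where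
  "adjoint_mat A = (\<chi> i j. cnj (A $ j $ i))"

text \<open>Identification of (C^n \<otimes> C^n) \<otimes> C^n with C^n \<otimes> (C^n \<otimes> C^n):
  reindex a matrix indexed by ('n\<times>'n)\<times>'n by 'n\<times>('n\<times>'n).\<close>
definition reassoc :: "'a^(('n::finite\<times>'n)\<times>'n)^(('n\<times>'n)\<times>'n) \<Rightarrow> 'a^('n\<times>('n\<times>'n))^('n\<times>('n\<times>'n))" where
  "reassoc M = (\<chi> x y. M $ ((fst x, fst (snd x)), snd (snd x)) $ ((fst y, fst (snd y)), snd (snd y)))"

definition P1 :: "complex^('n::finite\<times>'n)^('n\<times>'n) \<Rightarrow> complex^('n\<times>('n\<times>'n))^('n\<times>('n\<times>'n))" where
  "P1 P = reassoc (kron P (mat 1 :: complex^'n^'n))"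

definition P2 :: "complex^('n::finite\<times>'n)^('n\<times>'n) \<Rightarrow> complex^('n\<times>('n\<times>'n))^('n\<times>('n\<times>'n))" where
  "P2 P = kron (mat 1 :: complex^'n^'n) P"

end

theory Submission
  imports Defs
begin

text \<open>Write a = P1, b = P2, q = Q^2, X = a - b and R = a - aba. Multiplying the relation
  q (aba - bab) = a - b by a and by b gives q X^4 = (q - 1) X^2, which for Hermitian X
  sharpens to q X^3 = (q - 1) X. Hence (q/(q - 1)) X^2 is an idempotent of the same rank as
  X (and X = 0 if q = 1), so (q - 1) rank X = q tr X^2 = 2 q tr R, using tr a = tr b.
  Similarly q R^2 = (q - 1) R, which makes C = (a + Q^2/(1 + Q) R) b satisfy C C^* = a and
  C b a = a - Q/(1 + Q) R; taking traces, tr (C P2 P1) = n r - k + k/Q with k = rank X / 2.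
  Finally, expanding P = P P^* writes P2 P1 as a sum of rank-one matrices u_i w_i^* with
  sum |u_i|^2 = sum |w_i|^2 = (tr P)^2 = r^2, and C^* is a contraction since C C^* = a,
  so Cauchy-Schwarz bounds |tr (C P2 P1)| by r^2.\<close>

section \<open>Rank and trace of idempotent matrices\<close>

lemma row_matrix_mult:
  fixes A :: "'a::semiring_1^'n^'m" and B :: "'a^'p^'n"
  shows "row i (A ** B) = (\<Sum>k\<in>UNIV. A $ i $ k *s row k B)"
  by (simp add: vec_eq_iff row_def matrix_matrix_mult_def sum_component)

lemma rank_mul_le_right_gen:
  fixes A :: "'a::field^'n^'m" and B :: "'a^'p^'n"
  shows "rank (A ** B) \<le> rank B"
proof -
  have "rows (A ** B) \<subseteq> vec.span (rows B)"
  proof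
    fix r assume "r \<in> rows (A ** B)"
    then obtain i where r: "r = row i (A ** B)" by (auto simp: rows_def)
    show "r \<in> vec.span (rows B)"
      unfolding r row_matrix_mult
      by (intro vec.span_sum vec.span_scale vec.span_base) (auto simp: rows_def)
  qed
  then show ?thesis
    unfolding row_rank_def_gen by (metis vec.dim_span vec.dim_subset)
qed

lemma trace_scaleR: "trace (c *\<^sub>R (A::'a::real_algebra_1^'n^'n)) = c *\<^sub>R trace A"
  by (simp add: trace_def scaleR_sum_right)

lemma trace_idempotent_eq_rank:
  fixes E :: "'a::field^'n^'n"
  assumes idem: "E ** E = E"
  shows "trace E = of_nat (rank E)"
proof -
  \<comment> \<open>With the rows of E expanded in a basis B of the row space, trace E is the sum over
    c \<in> B of the c-coordinate of c, computed through E = E ** E.\<close>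
  obtain B where B_rows: "B \<subseteq> rows E" and indep: "vec.independent B"
    and rows_span: "rows E \<subseteq> vec.span B" and card_B: "card B = vec.dim (rows E)"
    by (rule vec.basis_exists)
  have fin: "finite B" using indep by (rule vec.finiteI_independent)
  define rep where "rep i = vec.representation B (row i E)" for i
  have row_span: "row i E \<in> vec.span B" for i using rows_span by (auto simp: rows_def)
  have diag: "E $ i $ i = (\<Sum>c\<in>B. rep i c * c $ i)" for i
  proof -
    have "row i E = (\<Sum>c\<in>B. rep i c *s c)"
      unfolding rep_def by (rule vec.sum_representation_eq[symmetric, OF indep row_span fin order_refl])
    then have "(row i E) $ i = (\<Sum>c\<in>B. rep i c * c $ i)" by (simp add: sum_component)
    then show ?thesis by (simp add: row_def)
  qed
  have coord_self: "(\<Sum>i\<in>UNIV. c $ i * rep i c) = 1" if c: "c \<in> B" for c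
  proof -
    obtain j where c_row: "c = row j E" using c B_rows by (auto simp: rows_def)
    have "row j E = row j (E ** E)" using idem by simp
    also have "\<dots> = (\<Sum>i\<in>UNIV. E $ j $ i *s row i E)" by (rule row_matrix_mult)
    finally have c_eq: "c = (\<Sum>i\<in>UNIV. c $ i *s row i E)" using c_row by (simp add: row_def)
    have "1 = vec.representation B c c"
      by (simp add: vec.representation_basis[OF indep c])
    also have "\<dots> = (\<Sum>i\<in>UNIV. vec.representation B (c $ i *s row i E) c)"
      by (subst c_eq, subst vec.representation_sum[OF indep]) (auto intro: vec.span_scale row_span)
    also have "\<dots> = (\<Sum>i\<in>UNIV. c $ i * rep i c)"
      by (simp add: vec.representation_scale[OF indep row_span] rep_def)
    finally show ?thesis by simp
  qed
  have "trace E = (\<Sum>c\<in>B. \<Sum>i\<in>UNIV. c $ i * rep i c)"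
    unfolding trace_def diag by (subst sum.swap) (simp add: mult.commute)
  also have "\<dots> = of_nat (card B)" by (simp add: coord_self)
  finally show ?thesis by (simp add: card_B row_rank_def_gen)
qed

lemma matrix_add_rdistrib: "((A::'a::semiring_1^'n^'m) + B) ** C = A ** C + B ** C"
  by (vector matrix_matrix_mult_def sum.distrib[symmetric] field_simps)

lemma matrix_diff_ldistrib: "(A::'a::ring_1^'n^'m) ** (B - C) = A ** B - A ** C"
  by (vector matrix_matrix_mult_def sum_subtractf[symmetric] field_simps)

lemma matrix_diff_rdistrib: "((A::'a::ring_1^'n^'m) - B) ** C = A ** C - B ** C"
  by (vector matrix_matrix_mult_def sum_subtractf[symmetric] field_simps)

lemma matrix_scaleR_mult_left: "(c *\<^sub>R (A::'a::real_algebra_1^'n^'m)) ** B = c *\<^sub>R (A ** B)"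
  by (simp add: scalar_matrix_assoc)

lemma matrix_scaleR_mult_right: "(A::'a::real_algebra_1^'n^'m) ** (c *\<^sub>R B) = c *\<^sub>R (A ** B)"
  by (simp add: matrix_scalar_ac scalar_matrix_assoc)

lemmas matrix_mult_simps = matrix_mul_assoc matrix_add_ldistrib matrix_add_rdistrib
  matrix_diff_ldistrib matrix_diff_rdistrib matrix_scaleR_mult_left matrix_scaleR_mult_right

lemma rank_eq_trace_sq_if_cube:
  fixes X :: "'a::real_field^'n^'n"
  assumes cube: "X ** X ** X = c *\<^sub>R X" and "c \<noteq> 0"
  shows "c *\<^sub>R of_nat (rank X) = trace (X ** X)"
proof -
  define E where "E = (1 / c) *\<^sub>R (X ** X)"
  have "E ** E = (1 / c) *\<^sub>R (1 / c) *\<^sub>R (X ** X ** X ** X)"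
    by (simp add: E_def matrix_mult_simps)
  also have "\<dots> = E"
    using \<open>c \<noteq> 0\<close> by (simp add: E_def cube matrix_mult_simps)
  finally have idem: "E ** E = E" .
  have "X ** E = X"
    using \<open>c \<noteq> 0\<close> by (simp add: E_def matrix_mult_simps cube)
  then have "rank X \<le> rank E" by (metis rank_mul_le_right_gen)
  moreover have "rank E \<le> rank X"
    unfolding E_def by (metis matrix_scaleR_mult_left rank_mul_le_right_gen)
  ultimately have "rank X = rank E" by simp
  moreover have "trace (X ** X) = c *\<^sub>R trace E"
    using \<open>c \<noteq> 0\<close> by (simp add: E_def trace_scaleR)
  ultimately show ?thesis by (simp add: trace_idempotent_eq_rank[OF idem])
qed

section \<open>Conjugate transpose\<close>

lemma adjoint_mat_nth [simp]: "adjoint_mat A $ i $ j = cnj (A $ j $ i)"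
  by (simp add: adjoint_mat_def)

lemma adjoint_mat_mult: "adjoint_mat (A ** B) = adjoint_mat B ** adjoint_mat A"
  by (simp add: vec_eq_iff matrix_matrix_mult_def mult.commute)

lemma adjoint_mat_add: "adjoint_mat (A + B) = adjoint_mat A + adjoint_mat B"
  by (simp add: vec_eq_iff)

lemma adjoint_mat_diff: "adjoint_mat (A - B) = adjoint_mat A - adjoint_mat B"
  by (simp add: vec_eq_iff)

lemma adjoint_mat_scaleR: "adjoint_mat (c *\<^sub>R A) = c *\<^sub>R adjoint_mat A"
  by (simp add: vec_eq_iff)

definition cinner :: "complex^'n \<Rightarrow> complex^'n \<Rightarrow> complex" where
  "cinner x y = (\<Sum>i\<in>UNIV. cnj (x $ i) * y $ i)"

lemma cinner_self: "cinner x x = of_real (\<Sum>i\<in>UNIV. (cmod (x $ i))\<^sup>2)"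
  unfolding cinner_def by (simp add: complex_norm_square mult.commute del: of_real_power)

lemma adjoint_mat_mult_self_eq_0D:
  fixes A :: "complex^'n^'n"
  assumes "adjoint_mat A ** A = 0"
  shows "A = 0"
proof -
  have "(adjoint_mat A ** A) $ j $ j = of_real (\<Sum>i\<in>UNIV. (cmod (A $ i $ j))\<^sup>2)" for j
    by (simp add: matrix_matrix_mult_def complex_norm_square mult.commute del: of_real_power)
  then have "complex_of_real (\<Sum>i\<in>UNIV. (cmod (A $ i $ j))\<^sup>2) = 0" for j
    using assms by simp
  then have "(\<Sum>i\<in>UNIV. (cmod (A $ i $ j))\<^sup>2) = 0" for j
    by (simp only: of_real_eq_0_iff)
  then show ?thesis by (simp add: vec_eq_iff sum_nonneg_eq_0_iff)
qed

lemma hermitian_cube_eq_0D: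
  fixes X :: "complex^'n^'n"
  assumes herm: "adjoint_mat X = X" and "X ** X ** X = 0"
  shows "X = 0"
proof -
  have "adjoint_mat (X ** X) ** (X ** X) = X ** (X ** X ** X)"
    by (simp add: adjoint_mat_mult herm matrix_mul_assoc)
  also have "\<dots> = 0" using assms(2) by simp
  finally have "X ** X = 0" by (rule adjoint_mat_mult_self_eq_0D)
  then have "adjoint_mat X ** X = 0" using herm by simp
  then show ?thesis by (rule adjoint_mat_mult_self_eq_0D)
qed

lemma cinner_adjoint_mat_left: "cinner (adjoint_mat A *v x) y = cinner x (A *v y)"
  unfolding cinner_def matrix_vector_mult_def
  by (simp add: sum_distrib_left sum_distrib_right mult_ac) (rule sum.swap)

lemma cinner_diff_left: "cinner (x - y) z = cinner x z - cinner y z"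
  unfolding cinner_def by (simp add: algebra_simps sum_subtractf)

lemma cinner_diff_right: "cinner z (x - y) = cinner z x - cinner z y"
  unfolding cinner_def by (simp add: algebra_simps sum_subtractf)

lemma sum_cmod_sq_adjoint_mat_le:
  fixes C a :: "complex^'n^'n"
  assumes herm: "adjoint_mat a = a" and idem: "a ** a = a" and C: "C ** adjoint_mat C = a"
  shows "(\<Sum>i\<in>UNIV. (cmod ((adjoint_mat C *v x) $ i))\<^sup>2) \<le> (\<Sum>i\<in>UNIV. (cmod (x $ i))\<^sup>2)"
proof -
  have sym: "cinner (a *v x) x = cinner x (a *v x)"
    using cinner_adjoint_mat_left[of a x x] herm by simp
  have sq: "cinner (a *v x) (a *v x) = cinner x (a *v x)"
    using cinner_adjoint_mat_left[of a x "a *v x"] herm idem by (simp add: matrix_vector_mul_assoc)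
  have "cinner (adjoint_mat C *v x) (adjoint_mat C *v x) = cinner x (a *v x)"
    by (simp add: cinner_adjoint_mat_left matrix_vector_mul_assoc C)
  also have "\<dots> = cinner x x - cinner (x - a *v x) (x - a *v x)"
    by (simp add: cinner_diff_left cinner_diff_right sym sq)
  finally have "(\<Sum>i\<in>UNIV. (cmod ((adjoint_mat C *v x) $ i))\<^sup>2)
      = (\<Sum>i\<in>UNIV. (cmod (x $ i))\<^sup>2) - (\<Sum>i\<in>UNIV. (cmod ((x - a *v x) $ i))\<^sup>2)"
    by (simp only: cinner_self of_real_diff[symmetric] of_real_eq_iff)
  then show ?thesis by (simp add: sum_nonneg)
qed

lemma sum_UNIV_prod:
  "(\<Sum>p\<in>(UNIV::('a::finite \<times> 'b::finite) set). f p) = (\<Sum>x\<in>UNIV. \<Sum>y\<in>UNIV. f (x, y))"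
  by (simp add: sum.cartesian_product)

lemma cmod_trace_mult_le:
  fixes C a M :: "complex^'n^'n" and u w :: "'k::finite \<Rightarrow> 'n \<Rightarrow> complex"
  assumes herm: "adjoint_mat a = a" and idem: "a ** a = a" and C: "C ** adjoint_mat C = a"
    and M: "\<And>i j. M $ i $ j = (\<Sum>k\<in>UNIV. u k i * cnj (w k j))"
  shows "cmod (trace (C ** M))
    \<le> sqrt (\<Sum>k\<in>UNIV. \<Sum>i\<in>UNIV. (cmod (u k i))\<^sup>2) * sqrt (\<Sum>k\<in>UNIV. \<Sum>i\<in>UNIV. (cmod (w k i))\<^sup>2)"
proof -
  define v where "v k = adjoint_mat C *v vec_lambda (w k)" for k
  have "trace (C ** M) = (\<Sum>j\<in>UNIV. \<Sum>i\<in>UNIV. \<Sum>k\<in>UNIV. C $ j $ i * (u k i * cnj (w k j)))"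
    by (simp add: trace_def matrix_matrix_mult_def M sum_distrib_left)
  also have "\<dots> = (\<Sum>k\<in>UNIV. \<Sum>i\<in>UNIV. u k i * cnj (v k $ i))"
    by (simp add: v_def matrix_vector_mult_def sum_distrib_left mult_ac
        sum.swap[where A = "UNIV :: 'n set" and B = "UNIV :: 'k set"])
      (rule sum.cong[OF refl], rule sum.swap)
  finally have trace_eq: "trace (C ** M) = (\<Sum>(k, i)\<in>UNIV. u k i * cnj (v k $ i))"
    by (simp add: sum_UNIV_prod)
  have "(\<Sum>k\<in>UNIV. \<Sum>i\<in>UNIV. (cmod (v k $ i))\<^sup>2) \<le> (\<Sum>k\<in>UNIV. \<Sum>i\<in>UNIV. (cmod (w k i))\<^sup>2)"
  proof (rule sum_mono)
    fix k
    show "(\<Sum>i\<in>UNIV. (cmod (v k $ i))\<^sup>2) \<le> (\<Sum>i\<in>UNIV. (cmod (w k i))\<^sup>2)"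
      using sum_cmod_sq_adjoint_mat_le[OF herm idem C, of "vec_lambda (w k)"] by (simp add: v_def)
  qed
  then have v_le: "L2_set (\<lambda>(k, i). cmod (v k $ i)) UNIV
      \<le> sqrt (\<Sum>k\<in>UNIV. \<Sum>i\<in>UNIV. (cmod (w k i))\<^sup>2)"
    by (simp add: L2_set_def sum_UNIV_prod)
  have "cmod (trace (C ** M)) \<le> (\<Sum>(k, i)\<in>UNIV. cmod (u k i) * cmod (v k $ i))"
    unfolding trace_eq by (rule order_trans[OF norm_sum]) (simp add: norm_mult case_prod_beta)
  also have "\<dots> \<le> L2_set (\<lambda>(k, i). cmod (u k i)) UNIV * L2_set (\<lambda>(k, i). cmod (v k $ i)) UNIV"
    using L2_set_mult_ineq[of "\<lambda>(k, i). cmod (u k i)" "\<lambda>(k, i). cmod (v k $ i)" UNIV]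
    by (simp add: case_prod_beta)
  also have "\<dots> \<le> sqrt (\<Sum>k\<in>UNIV. \<Sum>i\<in>UNIV. (cmod (u k i))\<^sup>2) * sqrt (\<Sum>k\<in>UNIV. \<Sum>i\<in>UNIV. (cmod (w k i))\<^sup>2)"
    using v_le by (auto simp: L2_set_def sum_UNIV_prod intro!: mult_left_mono sum_nonneg)
  finally show ?thesis .
qed

lemma hermitian_idempotent_nth:
  fixes P :: "complex^'n^'n"
  assumes "adjoint_mat P = P" and "P ** P = P"
  shows "P $ i $ j = (\<Sum>k\<in>UNIV. P $ i $ k * cnj (P $ j $ k))"
proof -
  have "(P ** adjoint_mat P) $ i $ j = P $ i $ j" using assms by simp
  then show ?thesis by (simp add: matrix_matrix_mult_def)
qed

lemma sum_cmod_sq_hermitian_idempotent: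
  fixes P :: "complex^'n^'n"
  assumes "adjoint_mat P = P" and "P ** P = P"
  shows "(\<Sum>i\<in>UNIV. \<Sum>j\<in>UNIV. (cmod (P $ i $ j))\<^sup>2) = real (rank P)"
proof -
  have "of_nat (rank P) = trace P" by (rule trace_idempotent_eq_rank[OF assms(2), symmetric])
  also have "\<dots> = (\<Sum>i\<in>UNIV. \<Sum>j\<in>UNIV. P $ i $ j * cnj (P $ i $ j))"
    unfolding trace_def by (rule sum.cong[OF refl], rule hermitian_idempotent_nth[OF assms])
  also have "\<dots> = of_real (\<Sum>i\<in>UNIV. \<Sum>j\<in>UNIV. (cmod (P $ i $ j))\<^sup>2)"
    by (simp add: complex_norm_square del: of_real_power)
  finally have "of_real (real (rank P)) = (of_real (\<Sum>i\<in>UNIV. \<Sum>j\<in>UNIV. (cmod (P $ i $ j))\<^sup>2) :: complex)"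
    by simp
  then show ?thesis by (simp only: of_real_eq_iff)
qed

section \<open>Two idempotents satisfying the relation\<close>

locale idempotent_pair =
  fixes a b :: "'a::real_algebra_1^'m^'m" and q :: real
  assumes idem_a: "a ** a = a" and idem_b: "b ** b = b"
    and relation: "q *\<^sub>R (a ** b ** a - b ** a ** b) = a - b"
begin

lemma mult_idem_a: "A ** a ** a = A ** a"
  by (metis idem_a matrix_mul_assoc)

lemma mult_idem_b: "A ** b ** b = A ** b"
  by (metis idem_b matrix_mul_assoc)

lemmas idem = idem_a idem_b mult_idem_a mult_idem_b

definition R where "R = a - a ** b ** a"

definition X where "X = a - b"

lemma relation_mult_a: "q *\<^sub>R (a ** b ** a - b ** a ** b ** a) = a - b ** a"
proof -
  have "(q *\<^sub>R (a ** b ** a - b ** a ** b)) ** a = (a - b) ** a" by (simp add: relation)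
  then show ?thesis by (simp add: matrix_mult_simps idem)
qed

lemma relation_mult_b: "q *\<^sub>R (a ** b ** a ** b - b ** a ** b) = a ** b - b"
proof -
  have "(q *\<^sub>R (a ** b ** a - b ** a ** b)) ** b = (a - b) ** b" by (simp add: relation)
  then show ?thesis by (simp add: matrix_mult_simps idem)
qed

lemma relation_sandwich_a: "q *\<^sub>R (a ** b ** a - a ** b ** a ** b ** a) = R"
proof -
  have "a ** (q *\<^sub>R (a ** b ** a - b ** a ** b)) ** a = a ** (a - b) ** a" by (simp add: relation)
  then show ?thesis by (simp add: R_def matrix_mult_simps idem)
qed

lemma a_mult_R: "a ** R = R"
  by (simp add: R_def matrix_mult_simps idem)

lemma R_mult_a: "R ** a = R"
  by (simp add: R_def matrix_mult_simps idem)

lemma R_mult_R: "q *\<^sub>R (R ** R) = (q - 1) *\<^sub>R R"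
proof -
  have "R ** R = R - (a ** b ** a - a ** b ** a ** b ** a)"
    by (simp add: R_def matrix_mult_simps idem algebra_simps)
  then have "q *\<^sub>R (R ** R) = q *\<^sub>R R - q *\<^sub>R (a ** b ** a - a ** b ** a ** b ** a)"
    by (simp add: scaleR_diff_right)
  also have "\<dots> = q *\<^sub>R R - R" by (simp only: relation_sandwich_a)
  finally show ?thesis by (simp add: scaleR_diff_left)
qed

lemma X_mult_X: "X ** X = a + b - a ** b - b ** a"
  by (simp add: X_def matrix_mult_simps idem algebra_simps)

lemma X_pow4: "q *\<^sub>R (X ** X ** X ** X) = (q - 1) *\<^sub>R (X ** X)"
proof -
  have "X ** X ** X ** X
      = X ** X - (a ** b ** a - b ** a ** b ** a) + (a ** b ** a ** b - b ** a ** b)"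
    by (simp add: X_def matrix_mult_simps idem algebra_simps)
  then have "q *\<^sub>R (X ** X ** X ** X) = q *\<^sub>R (X ** X)
      - q *\<^sub>R (a ** b ** a - b ** a ** b ** a) + q *\<^sub>R (a ** b ** a ** b - b ** a ** b)"
    by (simp add: scaleR_diff_right scaleR_add_right)
  also have "\<dots> = q *\<^sub>R (X ** X) - (a - b ** a) + (a ** b - b)"
    by (simp only: relation_mult_a relation_mult_b)
  finally show ?thesis by (simp add: X_mult_X scaleR_diff_left algebra_simps)
qed

end

locale projection_pair = idempotent_pair a b "Q\<^sup>2"
  for a b :: "complex^'m^'m" and Q :: real +
  assumes hermitian_a: "adjoint_mat a = a" and hermitian_b: "adjoint_mat b = b"
    and trace_a_eq_b: "trace a = trace b" and Q_pos: "Q > 0"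
begin

lemma hermitian_X: "adjoint_mat X = X"
  by (simp add: X_def adjoint_mat_diff hermitian_a hermitian_b)

lemma hermitian_R: "adjoint_mat R = R"
  by (simp add: R_def adjoint_mat_diff adjoint_mat_mult hermitian_a hermitian_b matrix_mul_assoc)

lemma X_pow3: "Q\<^sup>2 *\<^sub>R (X ** X ** X) = (Q\<^sup>2 - 1) *\<^sub>R X"
proof -
  define Z where "Z = Q\<^sup>2 *\<^sub>R (X ** X ** X) - (Q\<^sup>2 - 1) *\<^sub>R X"
  have "adjoint_mat Z ** Z = Z ** Z"
    by (simp add: Z_def adjoint_mat_diff adjoint_mat_scaleR adjoint_mat_mult hermitian_X matrix_mul_assoc)
  also have "\<dots> = (Q\<^sup>2 *\<^sub>R (X ** X) - (Q\<^sup>2 - 1) *\<^sub>R mat 1)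
      ** (Q\<^sup>2 *\<^sub>R (X ** X ** X ** X) - (Q\<^sup>2 - 1) *\<^sub>R (X ** X))"
    by (simp add: Z_def matrix_mult_simps algebra_simps)
  also have "\<dots> = 0" by (simp add: X_pow4)
  finally have "Z = 0" by (rule adjoint_mat_mult_self_eq_0D)
  then show ?thesis by (simp add: Z_def)
qed

lemma trace_X_mult_X: "trace (X ** X) = 2 * trace R"
proof -
  have "trace (a ** b ** a) = trace (a ** b)"
    by (metis idem_a matrix_mul_assoc trace_mul_sym)
  then show ?thesis
    by (simp add: X_mult_X R_def trace_add trace_sub trace_a_eq_b trace_mul_sym[of b a])
qed

lemma rank_X: "(Q\<^sup>2 - 1) * real (rank X) = 2 * Q\<^sup>2 * Re (trace R)"
proof (cases "Q = 1")
  case True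
  then have "X ** X ** X = 0" using X_pow3 by simp
  then have "X = 0" by (rule hermitian_cube_eq_0D[OF hermitian_X])
  then have "trace R = 0" using trace_X_mult_X by (simp add: trace_def)
  with True show ?thesis by simp
next
  case False
  then have "Q\<^sup>2 \<noteq> 1" using Q_pos by (simp add: power2_eq_1_iff)
  with Q_pos have nonzero: "(Q\<^sup>2 - 1) / Q\<^sup>2 \<noteq> 0" by simp
  have "X ** X ** X = (1 / Q\<^sup>2) *\<^sub>R (Q\<^sup>2 *\<^sub>R (X ** X ** X))" using Q_pos by simp
  also have "\<dots> = ((Q\<^sup>2 - 1) / Q\<^sup>2) *\<^sub>R X" by (simp add: X_pow3)
  finally have cube: "X ** X ** X = ((Q\<^sup>2 - 1) / Q\<^sup>2) *\<^sub>R X" .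
  have "((Q\<^sup>2 - 1) / Q\<^sup>2) *\<^sub>R of_nat (rank X) = 2 * trace R"
    using rank_eq_trace_sq_if_cube[OF cube nonzero] unfolding trace_X_mult_X .
  then have "Re (((Q\<^sup>2 - 1) / Q\<^sup>2) *\<^sub>R of_nat (rank X)) = Re (2 * trace R)"
    by (rule arg_cong)
  then have "(Q\<^sup>2 - 1) / Q\<^sup>2 * real (rank X) = 2 * Re (trace R)" by simp
  with Q_pos show ?thesis by (simp add: field_simps)
qed

lemma R_mult_R_eq_scaleR: "R ** R = ((Q\<^sup>2 - 1) / Q\<^sup>2) *\<^sub>R R"
proof -
  have "R ** R = (1 / Q\<^sup>2) *\<^sub>R (Q\<^sup>2 *\<^sub>R (R ** R))" using Q_pos by simp
  then show ?thesis by (simp add: R_mult_R)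
qed

definition G where "G = a + (Q\<^sup>2 / (1 + Q)) *\<^sub>R R"

definition C where "C = G ** b"

lemma G_mult_a: "G ** a = G" and a_mult_G: "a ** G = G"
  by (simp_all add: G_def matrix_mult_simps idem a_mult_R R_mult_a)

lemma G_mult_R: "G ** R = Q *\<^sub>R R" and R_mult_G: "R ** G = Q *\<^sub>R R"
proof -
  have coeff: "Q\<^sup>2 / (1 + Q) * ((Q\<^sup>2 - 1) / Q\<^sup>2) = Q - 1"
    using Q_pos by (simp add: divide_simps power2_eq_square) (simp add: algebra_simps)
  have "R + (Q\<^sup>2 / (1 + Q)) *\<^sub>R (R ** R) = Q *\<^sub>R R"
    using coeff by (simp add: R_mult_R_eq_scaleR scaleR_diff_left)
  then show "G ** R = Q *\<^sub>R R" and "R ** G = Q *\<^sub>R R"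
    by (simp_all add: G_def matrix_mult_simps a_mult_R R_mult_a)
qed

lemma G_mult_b_mult_a: "G ** b ** a = a - (Q / (1 + Q)) *\<^sub>R R"
proof -
  have "G ** b ** a = G ** (a - R)"
    by (simp add: R_def matrix_mul_assoc G_mult_a)
  also have "\<dots> = G - Q *\<^sub>R R"
    by (simp add: matrix_diff_ldistrib G_mult_a G_mult_R)
  also have "\<dots> = a + (Q\<^sup>2 / (1 + Q) - Q) *\<^sub>R R"
    by (simp add: G_def scaleR_diff_left)
  also have "Q\<^sup>2 / (1 + Q) - Q = - (Q / (1 + Q))"
    using Q_pos by (simp add: field_simps power2_eq_square)
  finally show ?thesis by simp
qed

lemma C_mult_adjoint_C: "C ** adjoint_mat C = a"
proof -
  have "adjoint_mat G = G"
    by (simp add: G_def adjoint_mat_add adjoint_mat_scaleR hermitian_a hermitian_R)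
  then have "C ** adjoint_mat C = G ** b ** (a ** G)"
    by (simp add: C_def adjoint_mat_mult hermitian_b matrix_mul_assoc mult_idem_b a_mult_G)
  also have "\<dots> = (G ** b ** a) ** G" by (simp add: matrix_mul_assoc)
  also have "\<dots> = G - (Q / (1 + Q) * Q) *\<^sub>R R"
    by (simp add: G_mult_b_mult_a matrix_diff_rdistrib matrix_scaleR_mult_left R_mult_G a_mult_G)
  also have "\<dots> = a"
    using Q_pos by (simp add: G_def power2_eq_square)
  finally show ?thesis .
qed

lemma Re_trace_C_mult_b_mult_a:
  "Re (trace (C ** (b ** a))) = Re (trace a) - real (rank X) / 2 + real (rank X) / 2 / Q"
proof -
  have "C ** (b ** a) = a - (Q / (1 + Q)) *\<^sub>R R"
    by (simp add: C_def matrix_mul_assoc mult_idem_b G_mult_b_mult_a)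
  then have "Re (trace (C ** (b ** a))) = Re (trace a) - Q / (1 + Q) * Re (trace R)"
    by (simp add: trace_sub trace_scaleR)
  also have "Q / (1 + Q) * Re (trace R) = real (rank X) / 2 - real (rank X) / 2 / Q"
  proof -
    have "Re (trace R) = (Q\<^sup>2 - 1) * real (rank X) / (2 * Q\<^sup>2)"
      using rank_X Q_pos by (simp add: field_simps)
    then show ?thesis
      using Q_pos by (simp add: field_simps power2_eq_square)
  qed
  finally show ?thesis by simp
qed

end

section \<open>The embeddings P1 and P2\<close>

lemma mult_if_zero_left: "(if c then x else 0) * (y::'a::mult_zero) = (if c then x * y else 0)"
  by simp

lemma mult_if_zero_right: "(y::'a::mult_zero) * (if c then x else 0) = (if c then y * x else 0)"
  by simp

lemma sum_if_zero: "(\<Sum>y\<in>A. if c then f y else 0) = (if c then sum f A else 0)"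
  by simp

lemmas if_zero_simps = mult_if_zero_left mult_if_zero_right sum_if_zero

lemma P1_nth:
  "P1 P $ (x, y, z) $ (x', y', z') = (if z = z' then P $ (x, y) $ (x', y') else 0)"
  by (simp add: P1_def reassoc_def kron_def mat_def)

lemma P2_nth: "P2 P $ (x, y) $ (x', y') = (if x = x' then P $ y $ y' else 0)"
  by (simp add: P2_def kron_def mat_def)

lemma P1_mult: "P1 A ** P1 B = P1 (A ** B)"
  by (simp add: vec_eq_iff matrix_matrix_mult_def P1_nth sum_UNIV_prod if_zero_simps
      sum_distrib_right)

lemma P2_mult: "P2 A ** P2 B = P2 (A ** B)"
  by (simp add: vec_eq_iff matrix_matrix_mult_def P2_nth sum_UNIV_prod if_zero_simps)

lemma adjoint_mat_P1: "adjoint_mat (P1 A) = P1 (adjoint_mat A)"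
  by (auto simp: vec_eq_iff P1_nth)

lemma adjoint_mat_P2: "adjoint_mat (P2 A) = P2 (adjoint_mat A)"
  by (auto simp: vec_eq_iff P2_nth)

lemma trace_P1: "trace (P1 (A::complex^('n::finite \<times> 'n)^('n \<times> 'n))) = of_nat CARD('n) * trace A"
  by (simp add: trace_def P1_nth sum_UNIV_prod sum_distrib_left)

lemma trace_P2: "trace (P2 (A::complex^('n::finite \<times> 'n)^('n \<times> 'n))) = of_nat CARD('n) * trace A"
  by (simp add: trace_def P2_nth sum_UNIV_prod sum_distrib_left)

lemma P2_mult_P1_nth:
  "(P2 P ** P1 P) $ (x, y, z) $ (x', y', z') = (\<Sum>v\<in>UNIV. P $ (y, z) $ (v, z') * P $ (x, v) $ (x', y'))"
  by (simp add: matrix_matrix_mult_def P1_nth P2_nth sum_UNIV_prod if_zero_simps)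

\<comment> \<open>Index k = (v, J, K): v is the summation index of P2 P ** P1 P, and J, K are the
  summation indices of P = P ** adjoint_mat P applied to its two factors.\<close>
definition P2_P1_factor_left ::
    "complex^('n::finite \<times> 'n)^('n \<times> 'n) \<Rightarrow> 'n \<times> ('n \<times> 'n) \<times> ('n \<times> 'n) \<Rightarrow> 'n \<times> 'n \<times> 'n \<Rightarrow> complex"
  where "P2_P1_factor_left P = (\<lambda>(v, J, K) (x, y, z). P $ (y, z) $ J * P $ (x, v) $ K)"

definition P2_P1_factor_right ::
    "complex^('n::finite \<times> 'n)^('n \<times> 'n) \<Rightarrow> 'n \<times> ('n \<times> 'n) \<times> ('n \<times> 'n) \<Rightarrow> 'n \<times> 'n \<times> 'n \<Rightarrow> complex"
  where "P2_P1_factor_right P = (\<lambda>(v, J, K) (x, y, z). P $ (v, z) $ J * P $ (x, y) $ K)"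

lemma P2_mult_P1_eq_sum_factors:
  assumes herm: "adjoint_mat P = P" and idem: "P ** P = P"
  shows "(P2 P ** P1 P) $ X $ Y
    = (\<Sum>k\<in>UNIV. P2_P1_factor_left P k X * cnj (P2_P1_factor_right P k Y))"
proof -
  obtain x y z x' y' z' where XY: "X = (x, y, z)" "Y = (x', y', z')" by (metis prod_cases3)
  have "(P2 P ** P1 P) $ X $ Y = (\<Sum>v\<in>UNIV. (\<Sum>J\<in>UNIV. P $ (y, z) $ J * cnj (P $ (v, z') $ J))
      * (\<Sum>K\<in>UNIV. P $ (x, v) $ K * cnj (P $ (x', y') $ K)))"
    by (simp add: XY P2_mult_P1_nth hermitian_idempotent_nth[OF herm idem, symmetric])
  also have "\<dots> = (\<Sum>v\<in>UNIV. \<Sum>J\<in>UNIV. \<Sum>K\<in>UNIV.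
      (P $ (y, z) $ J * cnj (P $ (v, z') $ J)) * (P $ (x, v) $ K * cnj (P $ (x', y') $ K)))"
    by (simp add: sum_product)
  also have "\<dots> = (\<Sum>k\<in>UNIV. P2_P1_factor_left P k X * cnj (P2_P1_factor_right P k Y))"
    by (simp add: P2_P1_factor_left_def P2_P1_factor_right_def XY sum_UNIV_prod mult_ac)
  finally show ?thesis .
qed

lemma sum_cmod_sq_P2_P1_factor_left:
  "(\<Sum>k\<in>UNIV. \<Sum>X\<in>UNIV. (cmod (P2_P1_factor_left P k X))\<^sup>2)
    = (\<Sum>A\<in>UNIV. \<Sum>B\<in>UNIV. (cmod (P $ A $ B))\<^sup>2)\<^sup>2"
proof -
  define F where "F = (\<lambda>(A, B). (cmod (P $ A $ B))\<^sup>2)"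
  have "(\<Sum>k\<in>UNIV. \<Sum>X\<in>UNIV. (cmod (P2_P1_factor_left P k X))\<^sup>2) = (\<Sum>(p, p')\<in>UNIV. F p * F p')"
    unfolding sum.cartesian_product
    by (rule sum.reindex_bij_witness[where j = "\<lambda>((v, J, K), (x, y, z)). (((y, z), J), ((x, v), K))"
          and i = "\<lambda>(((y, z), J), ((x, v), K)). ((v, J, K), (x, y, z))"])
      (auto simp: P2_P1_factor_left_def F_def norm_mult power_mult_distrib)
  then show ?thesis
    by (simp add: F_def sum_product sum.cartesian_product power2_eq_square)
qed

lemma sum_cmod_sq_P2_P1_factor_right:
  "(\<Sum>k\<in>UNIV. \<Sum>X\<in>UNIV. (cmod (P2_P1_factor_right P k X))\<^sup>2)
    = (\<Sum>A\<in>UNIV. \<Sum>B\<in>UNIV. (cmod (P $ A $ B))\<^sup>2)\<^sup>2"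
proof -
  define F where "F = (\<lambda>(A, B). (cmod (P $ A $ B))\<^sup>2)"
  have "(\<Sum>k\<in>UNIV. \<Sum>X\<in>UNIV. (cmod (P2_P1_factor_right P k X))\<^sup>2) = (\<Sum>(p, p')\<in>UNIV. F p * F p')"
    unfolding sum.cartesian_product
    by (rule sum.reindex_bij_witness[where j = "\<lambda>((v, J, K), (x, y, z)). (((v, z), J), ((x, y), K))"
          and i = "\<lambda>(((v, z), J), ((x, y), K)). ((v, J, K), (x, y, z))"])
      (auto simp: P2_P1_factor_right_def F_def norm_mult power_mult_distrib)
  then show ?thesis
    by (simp add: F_def sum_product sum.cartesian_product power2_eq_square)
qed

lemma cmod_trace_mult_P2_P1_le:
  fixes P :: "complex^('n::finite \<times> 'n)^('n \<times> 'n)"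
  assumes herm: "adjoint_mat P = P" and idem: "P ** P = P" and C: "C ** adjoint_mat C = P1 P"
  shows "cmod (trace (C ** (P2 P ** P1 P))) \<le> (real (rank P))\<^sup>2"
proof -
  have "adjoint_mat (P1 P) = P1 P" and "P1 P ** P1 P = P1 P"
    by (simp_all add: adjoint_mat_P1 P1_mult herm idem)
  from cmod_trace_mult_le[OF this C P2_mult_P1_eq_sum_factors[OF herm idem]] show ?thesis
    by (simp add: sum_cmod_sq_P2_P1_factor_left sum_cmod_sq_P2_P1_factor_right
        sum_cmod_sq_hermitian_idempotent[OF herm idem]) (simp add: power2_eq_square)
qed

theorem lemma6:
  fixes P :: "complex^('n::finite\<times>'n)^('n\<times>'n)" and Q :: real
  assumes "CARD('n) \<ge> 2"
    and "Q > 0"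
    and "adjoint_mat P = P"
    and "P ** P = P"
    and "(Q^2) *\<^sub>R (P1 P ** P2 P ** P1 P - P2 P ** P1 P ** P2 P) = P1 P - P2 P"
  shows "real (rank P) * real CARD('n) - real (rank (P1 P - P2 P)) / 2
           + (real (rank (P1 P - P2 P)) / 2) / Q \<le> (real (rank P))^2"
proof -
  interpret projection_pair "P1 P" "P2 P" Q
    using assms by unfold_locales
      (simp_all add: P1_mult P2_mult adjoint_mat_P1 adjoint_mat_P2 trace_P1 trace_P2)
  have "Re (trace (P1 P)) = real (rank P) * real CARD('n)"
    by (simp add: trace_P1 trace_idempotent_eq_rank[OF assms(4)])
  moreover have "Re (trace (C ** (P2 P ** P1 P))) \<le> (real (rank P))\<^sup>2"
    using cmod_trace_mult_P2_P1_le[OF assms(3,4) C_mult_adjoint_C]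
    by (meson complex_Re_le_cmod order_trans)
  ultimately show ?thesis
    using Re_trace_C_mult_b_mult_a by (simp add: X_def)
qed

end
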